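(* Let $(\mathcal{M},\mathrm{dist})$ be a metric space, $\mathcal{F}\subset2^{\mathcal{M}}$, and $J_\beta:\mathcal{M}\to\mathbb{R}\cup\{+\infty\}$, $0<\beta<+\infty$, lower semi-continuous functionals with $J_{\beta_1}\le J_{\beta_2}$ on $\mathcal{M}$ whenever $0<\beta_1\le\beta_2<+\infty$. Let $J_\infty=\sup_{\beta>0}J_\beta$ and $c_\beta=\inf_{A\in\mathcal{F}}\sup_AJ_\beta$ for $0<\beta\le+\infty$, and assume $c_\beta\in\mathbb{R}$ for all $0<\beta\le+\infty$. Assume (F2'): for every sequence $(A_n)\subset\mathcal{F}$ such that, for some $\beta$, $A_n\subset\mathcal{M}^{c_\infty+1}_\beta$ for all $n$, one has $\limsup_nA_n\in\mathcal{F}$. Then (1) for every $0<\beta<+\infty$ there is an optimal set for $J_\beta$ at $c_\beta$; (2) $c_\beta\to c_\infty$ as $\beta\to+\infty$; (3) if $\beta_n\to+\infty$ and $A_n\in\mathcal{F}$ is optimal for $J_{\beta_n}$ at $c_{\beta_n}$, then $\limsup_nA_n$ is optimal for $J_\infty$ at $c_\infty$.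
   Context: $\mathcal{M}^{c'}_\beta=\{x\in\mathcal{M}:J_\beta(x)\le c'\}$. A set $A$ is optimal for $J$ at $c$ if $A\in\mathcal{F}$ and $\sup_AJ=c$. For sets $A_n\subset\mathcal{M}$, $\limsup_nA_n$ is the set of $x$ such that for some $n_j\to\infty$ there are $x_{n_j}\in A_{n_j}$ with $x_{n_j}\to x$. *)

theory Defs
  imports "HOL-Analysis.Analysis" "HOL-Library.Extended_Real"
begin

text \<open>Lower semicontinuity of an extended-real valued functional on a metric space
  (sequential form, equivalent to the usual one in metric spaces).\<close>
definition lsc :: "('a::metric_space \<Rightarrow> ereal) \<Rightarrow> bool" where
  "lsc J \<longleftrightarrow> (\<forall>x xs. xs \<longlonglongrightarrow> x \<longrightarrow> J x \<le> liminf (\<lambda>n. J (xs n)))"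

text \<open>Kuratowski upper limit of a sequence of sets.\<close>
definition seq_limsup :: "(nat \<Rightarrow> 'a::metric_space set) \<Rightarrow> 'a set" where
  "seq_limsup A = {x. \<exists>nj xs. filterlim nj sequentially sequentially \<and>
       (\<forall>j. xs j \<in> A (nj j)) \<and> xs \<longlonglongrightarrow> x}"

definition minimax :: "'a set set \<Rightarrow> ('a \<Rightarrow> ereal) \<Rightarrow> ereal" where
  "minimax F J = (INF A\<in>F. SUP x\<in>A. J x)"

definition optimal :: "'a set set \<Rightarrow> ('a \<Rightarrow> ereal) \<Rightarrow> ereal \<Rightarrow> 'a set \<Rightarrow> bool" where
  "optimal F J c A \<longleftrightarrow> A \<in> F \<and> (SUP x\<in>A. J x) = c"

definition sublevel :: "('a \<Rightarrow> ereal) \<Rightarrow> ereal \<Rightarrow> 'a set" where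
  "sublevel J c = {x. J x \<le> c}"

end

theory Submission
  imports Defs
begin

text \<open>Take near-optimal sets \<open>A\<^sub>n\<close> for \<open>J\<^sub>\<beta>\<close>; by (F2') their upper limit is admissible, and lower
  semicontinuity passes the bounds \<open>sup\<^sub>A\<^sub>n J\<^sub>\<beta> \<le> c\<^sub>\<beta> + 1/(n+1)\<close> to it, so it is optimal.
  If \<open>A\<^sub>n\<close> is optimal for \<open>J\<^sub>\<beta>\<^sub>n\<close> with \<open>\<beta>\<^sub>n \<rightarrow> \<infinity>\<close>, then for each fixed \<open>\<beta>\<close> eventually
  \<open>J\<^sub>\<beta> \<le> J\<^sub>\<beta>\<^sub>n \<le> c\<^sub>\<beta>\<^sub>n \<le> sup\<^sub>\<gamma> c\<^sub>\<gamma>\<close> on \<open>A\<^sub>n\<close>, hence \<open>J\<^sub>\<infinity> \<le> sup\<^sub>\<gamma> c\<^sub>\<gamma>\<close> on the upper limit. This gives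
  \<open>c\<^sub>\<infinity> \<le> sup\<^sub>\<gamma> c\<^sub>\<gamma>\<close>; the reverse inequality and the monotonicity of \<open>c\<^sub>\<beta>\<close> are immediate.\<close>

lemma lsc_le_limit:
  fixes g :: "'a::metric_space \<Rightarrow> ereal" and e :: "nat \<Rightarrow> ereal"
  assumes "lsc g" "xs \<longlonglongrightarrow> x" "eventually (\<lambda>j. g (xs j) \<le> e j) sequentially" "e \<longlonglongrightarrow> L"
  shows "g x \<le> L"
proof -
  have "g x \<le> liminf (\<lambda>n. g (xs n))" using assms(1,2) unfolding lsc_def by blast
  also have "\<dots> \<le> liminf e" by (rule Liminf_mono) (use assms(3) in auto)
  also have "liminf e = L" using lim_imp_Liminf[OF _ assms(4)] by simp
  finally show ?thesis .
qed

lemma lsc_le_on_seq_limsup: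
  fixes g :: "'a::metric_space \<Rightarrow> ereal" and e :: "nat \<Rightarrow> ereal"
  assumes "lsc g" "eventually (\<lambda>n. \<forall>y\<in>A n. g y \<le> e n) sequentially" "e \<longlonglongrightarrow> L"
    and "x \<in> seq_limsup A"
  shows "g x \<le> L"
proof -
  obtain nj xs where nj: "filterlim nj sequentially sequentially"
    and xsA: "\<forall>j. xs j \<in> A (nj j)" and xs: "xs \<longlonglongrightarrow> x"
    using assms(4) unfolding seq_limsup_def by blast
  have "eventually (\<lambda>j. \<forall>y\<in>A (nj j). g y \<le> e (nj j)) sequentially"
    using filterlim_iff[THEN iffD1, OF nj] assms(2) by blast
  then have "eventually (\<lambda>j. g (xs j) \<le> e (nj j)) sequentially"
    by eventually_elim (use xsA in blast)
  moreover have "(\<lambda>j. e (nj j)) \<longlonglongrightarrow> L"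
    using filterlim_compose[OF assms(3) nj] .
  ultimately show ?thesis by (rule lsc_le_limit[OF assms(1) xs])
qed

lemma minimax_mono:
  assumes "\<And>x. g x \<le> h x"
  shows "minimax F g \<le> minimax F h"
  unfolding minimax_def by (rule INF_mono) (use assms in \<open>auto intro!: SUP_mono\<close>)

lemma minimax_le_SUP: "A \<in> F \<Longrightarrow> minimax F g \<le> (SUP x\<in>A. g x)"
  unfolding minimax_def by (rule INF_lower)

lemma optimal_le: "optimal F g c A \<Longrightarrow> x \<in> A \<Longrightarrow> g x \<le> c"
  unfolding optimal_def by (metis SUP_upper)

lemma optimalI_le_minimax:
  assumes "A \<in> F" "\<And>x. x \<in> A \<Longrightarrow> g x \<le> minimax F g"
  shows "optimal F g (minimax F g) A"
  unfolding optimal_def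
  using assms minimax_le_SUP[OF assms(1)] by (auto intro: antisym SUP_least)

lemma minimax_approximating_sets:
  assumes "minimax F g = ereal r"
  obtains A where "\<And>n. A n \<in> F" "\<And>n x. x \<in> A n \<Longrightarrow> g x \<le> ereal (r + 1 / (real n + 1))"
proof -
  have "\<exists>B\<in>F. (SUP x\<in>B. g x) < ereal (r + 1 / (real n + 1))" for n :: nat
  proof -
    have "minimax F g < ereal (r + 1 / (real n + 1))" using assms by simp
    then show ?thesis unfolding minimax_def by (simp add: INF_less_iff)
  qed
  then obtain A where AF: "\<And>n. A n \<in> F"
    and A_lt: "\<And>n. (SUP x\<in>A n. g x) < ereal (r + 1 / (real n + 1))"
    by metis
  show thesis
  proof (rule that[OF AF])
    fix n x assume "x \<in> A n"
    then have "g x \<le> (SUP x\<in>A n. g x)" by (rule SUP_upper)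
    with A_lt[of n] show "g x \<le> ereal (r + 1 / (real n + 1))" by simp
  qed
qed

lemma tendsto_at_top_positive_lower_bound:
  fixes \<beta>s :: "nat \<Rightarrow> real"
  assumes "filterlim \<beta>s at_top sequentially" "\<And>n. \<beta>s n > 0"
  obtains b where "b > 0" "\<And>n. b \<le> \<beta>s n"
proof -
  obtain N where N: "\<And>n. n \<ge> N \<Longrightarrow> \<beta>s n \<ge> 1"
    using assms(1) unfolding filterlim_at_top eventually_sequentially by blast
  define b where "b = Min (insert 1 (\<beta>s ` {..<N}))"
  have "b > 0" unfolding b_def using assms(2) by (subst Min_gr_iff) auto
  moreover have "b \<le> \<beta>s n" for n
  proof (cases "n < N")
    case True then show ?thesis unfolding b_def by (intro Min_le) auto
  next
    case False
    have "b \<le> 1" unfolding b_def by (intro Min_le) auto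
    then show ?thesis using N[of n] False by simp
  qed
  ultimately show thesis by (rule that)
qed

lemma tendsto_at_top_monotone_bounded:
  fixes c :: "real \<Rightarrow> 'b::linorder_topology"
  assumes mono: "\<And>x y. b < x \<Longrightarrow> x \<le> y \<Longrightarrow> c x \<le> c y"
    and upper: "\<And>x. b < x \<Longrightarrow> c x \<le> L"
    and approx: "\<And>a. a < L \<Longrightarrow> \<exists>x>b. a < c x"
  shows "(c \<longlongrightarrow> L) at_top"
proof (rule order_tendstoI)
  fix a assume "a < L"
  then obtain x0 where x0: "x0 > b" "a < c x0" using approx by blast
  have "a < c x" if "x0 \<le> x" for x
    using x0(2) mono[OF x0(1) that] by (rule less_le_trans)
  then show "\<forall>\<^sub>F x in at_top. a < c x" unfolding eventually_at_top_linorder by blast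
next
  fix a assume "L < a"
  have "c x < a" if "b + 1 \<le> x" for x
    using upper[of x] that \<open>L < a\<close> by (auto intro: le_less_trans)
  then show "\<forall>\<^sub>F x in at_top. c x < a" unfolding eventually_at_top_linorder by blast
qed

locale monotone_lsc_family =
  fixes F :: "'a::metric_space set set"
    and J :: "real \<Rightarrow> 'a \<Rightarrow> ereal"
    and Jinf :: "'a \<Rightarrow> ereal"
  assumes lsc: "\<And>\<beta>. \<beta> > 0 \<Longrightarrow> lsc (J \<beta>)"
    and mono: "\<And>\<beta>1 \<beta>2 x. 0 < \<beta>1 \<Longrightarrow> \<beta>1 \<le> \<beta>2 \<Longrightarrow> J \<beta>1 x \<le> J \<beta>2 x"
    and Jinf_eq: "Jinf = (\<lambda>x. SUP \<beta>\<in>{0<..}. J \<beta> x)"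
    and minimax_J_finite: "\<And>\<beta>. \<beta> > 0 \<Longrightarrow> \<bar>minimax F (J \<beta>)\<bar> \<noteq> \<infinity>"
    and minimax_Jinf_finite: "\<bar>minimax F Jinf\<bar> \<noteq> \<infinity>"
    and F2': "\<And>A \<beta>. (\<forall>n. A n \<in> F) \<Longrightarrow> \<beta> > 0 \<Longrightarrow>
               (\<forall>n. A n \<subseteq> sublevel (J \<beta>) (minimax F Jinf + 1)) \<Longrightarrow> seq_limsup A \<in> F"
begin

lemma J_le_Jinf: "\<beta> > 0 \<Longrightarrow> J \<beta> x \<le> Jinf x"
  unfolding Jinf_eq by (auto intro: SUP_upper)

lemma minimax_le_minimax_Jinf: "\<beta> > 0 \<Longrightarrow> minimax F (J \<beta>) \<le> minimax F Jinf"
  by (rule minimax_mono) (rule J_le_Jinf)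

lemma minimax_J_mono: "0 < \<beta>1 \<Longrightarrow> \<beta>1 \<le> \<beta>2 \<Longrightarrow> minimax F (J \<beta>1) \<le> minimax F (J \<beta>2)"
  by (rule minimax_mono) (rule mono)

lemma seq_limsup_in_F:
  assumes "\<And>n. A n \<in> F" "\<beta> > 0" "\<And>n x. x \<in> A n \<Longrightarrow> J \<beta> x \<le> minimax F Jinf + 1"
  shows "seq_limsup A \<in> F"
  using F2' assms unfolding sublevel_def by blast

lemma optimal_exists:
  assumes "\<beta> > 0"
  shows "\<exists>A. optimal F (J \<beta>) (minimax F (J \<beta>)) A"
proof -
  obtain r where r: "minimax F (J \<beta>) = ereal r"
    using minimax_J_finite[OF assms] by (cases "minimax F (J \<beta>)") auto
  obtain A where AF: "\<And>n. A n \<in> F"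
    and A_le: "\<And>n x. x \<in> A n \<Longrightarrow> J \<beta> x \<le> ereal (r + 1 / (real n + 1))"
    using minimax_approximating_sets[OF r] by blast
  have "J \<beta> x \<le> minimax F Jinf + 1" if "x \<in> A n" for n x
  proof -
    have "J \<beta> x \<le> minimax F (J \<beta>) + ereal (1 / (real n + 1))" using A_le[OF that] r by simp
    also have "\<dots> \<le> minimax F Jinf + 1"
      by (rule add_mono) (use minimax_le_minimax_Jinf[OF assms] in \<open>auto simp: divide_le_eq\<close>)
    finally show ?thesis .
  qed
  then have limsup_F: "seq_limsup A \<in> F" by (rule seq_limsup_in_F[OF AF assms])
  have "(\<lambda>n. 1 / (real n + 1)) \<longlonglongrightarrow> 0"
    using LIMSEQ_inverse_real_of_nat by (simp add: inverse_eq_divide add.commute)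
  then have "(\<lambda>n. r + 1 / (real n + 1)) \<longlonglongrightarrow> r"
    using tendsto_add[OF tendsto_const[of r]] by fastforce
  then have bound_lim: "(\<lambda>n. ereal (r + 1 / (real n + 1))) \<longlonglongrightarrow> ereal r"
    by (rule tendsto_ereal)
  have "J \<beta> x \<le> minimax F (J \<beta>)" if "x \<in> seq_limsup A" for x
    using lsc_le_on_seq_limsup[OF lsc[OF assms] _ bound_lim that] A_le r by simp
  then show ?thesis using optimalI_le_minimax[OF limsup_F] by blast
qed

lemma seq_limsup_of_optimal_in_F:
  assumes \<beta>s: "filterlim \<beta>s at_top sequentially" and pos: "\<And>n. \<beta>s n > 0"
    and opt: "\<And>n. optimal F (J (\<beta>s n)) (minimax F (J (\<beta>s n))) (A n)"
  shows "seq_limsup A \<in> F"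
proof -
  obtain b where b: "b > 0" "\<And>n. b \<le> \<beta>s n"
    using tendsto_at_top_positive_lower_bound[OF \<beta>s pos] by blast
  have bounded: "J b x \<le> minimax F Jinf + 1" if "x \<in> A n" for n x
  proof -
    have "J b x \<le> J (\<beta>s n) x" using mono b by blast
    also have "\<dots> \<le> minimax F (J (\<beta>s n))" using optimal_le[OF opt that] .
    also have "\<dots> \<le> minimax F Jinf" using minimax_le_minimax_Jinf pos by blast
    also have "\<dots> \<le> minimax F Jinf + 1" using minimax_Jinf_finite by (cases "minimax F Jinf") auto
    finally show ?thesis .
  qed
  show ?thesis
    by (rule seq_limsup_in_F[OF _ b(1) bounded]) (use opt in \<open>simp add: optimal_def\<close>)
qed

lemma Jinf_le_on_seq_limsup_of_optimal:
  assumes \<beta>s: "filterlim \<beta>s at_top sequentially" and pos: "\<And>n. \<beta>s n > 0"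
    and opt: "\<And>n. optimal F (J (\<beta>s n)) (minimax F (J (\<beta>s n))) (A n)"
    and bound: "\<And>n. minimax F (J (\<beta>s n)) \<le> L"
    and x: "x \<in> seq_limsup A"
  shows "Jinf x \<le> L"
  unfolding Jinf_eq
proof (rule SUP_least)
  fix \<beta> :: real assume "\<beta> \<in> {0<..}"
  then have \<beta>: "\<beta> > 0" by simp
  have "eventually (\<lambda>n. \<beta> \<le> \<beta>s n) sequentially"
    using \<beta>s unfolding filterlim_at_top by blast
  then have "eventually (\<lambda>n. \<forall>y\<in>A n. J \<beta> y \<le> L) sequentially"
  proof eventually_elim
    case (elim n)
    show ?case
    proof
      fix y assume "y \<in> A n"
      have "J \<beta> y \<le> J (\<beta>s n) y" using mono \<beta> elim by blast
      also have "\<dots> \<le> minimax F (J (\<beta>s n))" using optimal_le[OF opt \<open>y \<in> A n\<close>] .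
      also have "\<dots> \<le> L" by (rule bound)
      finally show "J \<beta> y \<le> L" .
    qed
  qed
  then show "J \<beta> x \<le> L" using lsc_le_on_seq_limsup[OF lsc[OF \<beta>] _ tendsto_const x] by blast
qed

lemma optimal_seq_limsup_of_optimal:
  assumes "filterlim \<beta>s at_top sequentially" "\<And>n. \<beta>s n > 0"
    and "\<And>n. optimal F (J (\<beta>s n)) (minimax F (J (\<beta>s n))) (A n)"
  shows "optimal F Jinf (minimax F Jinf) (seq_limsup A)"
proof (rule optimalI_le_minimax)
  show "seq_limsup A \<in> F" by (rule seq_limsup_of_optimal_in_F[OF assms])
  show "Jinf x \<le> minimax F Jinf" if "x \<in> seq_limsup A" for x
    using Jinf_le_on_seq_limsup_of_optimal[OF assms minimax_le_minimax_Jinf[OF assms(2)] that] .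
qed

lemma minimax_Jinf_le_SUP_minimax:
  "minimax F Jinf \<le> (SUP \<beta>\<in>{0<..}. minimax F (J \<beta>))" (is "_ \<le> ?L")
proof -
  define \<beta>s where "\<beta>s n = real (Suc n)" for n
  have \<beta>s: "filterlim \<beta>s at_top sequentially"
    unfolding \<beta>s_def using filterlim_compose[OF filterlim_real_sequentially filterlim_Suc] by (simp add: o_def)
  have pos: "\<And>n. \<beta>s n > 0" unfolding \<beta>s_def by simp
  obtain A where opt: "\<And>n. optimal F (J (\<beta>s n)) (minimax F (J (\<beta>s n))) (A n)"
    using optimal_exists[OF pos] by metis
  have bound: "\<And>n. minimax F (J (\<beta>s n)) \<le> ?L" using pos by (auto intro: SUP_upper)
  have "seq_limsup A \<in> F" by (rule seq_limsup_of_optimal_in_F[OF \<beta>s pos opt])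
  then have "minimax F Jinf \<le> (SUP x\<in>seq_limsup A. Jinf x)" by (rule minimax_le_SUP)
  also have "\<dots> \<le> ?L"
    by (rule SUP_least) (rule Jinf_le_on_seq_limsup_of_optimal[OF \<beta>s pos opt bound])
  finally show ?thesis .
qed

lemma minimax_tendsto: "((\<lambda>\<beta>. minimax F (J \<beta>)) \<longlongrightarrow> minimax F Jinf) at_top"
proof (rule tendsto_at_top_monotone_bounded[where b = 0])
  fix a assume "a < minimax F Jinf"
  then have "a < (SUP \<beta>\<in>{0<..}. minimax F (J \<beta>))"
    using minimax_Jinf_le_SUP_minimax by (rule less_le_trans)
  then show "\<exists>\<beta>>0. a < minimax F (J \<beta>)" by (auto simp: less_SUP_iff)
qed (auto intro: minimax_J_mono minimax_le_minimax_Jinf)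

end

theorem theorem2p7:
  fixes F :: "'a::metric_space set set"
    and J :: "real \<Rightarrow> 'a \<Rightarrow> ereal"
    and Jinf :: "'a \<Rightarrow> ereal"
  assumes no_minf: "\<And>\<beta> x. \<beta> > 0 \<Longrightarrow> J \<beta> x \<noteq> -\<infinity>"
    and lsc: "\<And>\<beta>. \<beta> > 0 \<Longrightarrow> lsc (J \<beta>)"
    and mono: "\<And>\<beta>1 \<beta>2 x. 0 < \<beta>1 \<Longrightarrow> \<beta>1 \<le> \<beta>2 \<Longrightarrow> J \<beta>1 x \<le> J \<beta>2 x"
    and Jinf_def: "Jinf = (\<lambda>x. SUP \<beta>\<in>{0<..}. J \<beta> x)"
    and c_fin: "\<And>\<beta>. \<beta> > 0 \<Longrightarrow> \<bar>minimax F (J \<beta>)\<bar> \<noteq> \<infinity>"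
    and cinf_fin: "\<bar>minimax F Jinf\<bar> \<noteq> \<infinity>"
    and F2': "\<And>A \<beta>. (\<forall>n. A n \<in> F) \<Longrightarrow> \<beta> > 0 \<Longrightarrow>
               (\<forall>n. A n \<subseteq> sublevel (J \<beta>) (minimax F Jinf + 1)) \<Longrightarrow> seq_limsup A \<in> F"
  shows "(\<forall>\<beta>>0. \<exists>A. optimal F (J \<beta>) (minimax F (J \<beta>)) A)
     \<and> ((\<lambda>\<beta>. minimax F (J \<beta>)) \<longlongrightarrow> minimax F Jinf) at_top
     \<and> (\<forall>\<beta>s A. filterlim \<beta>s at_top sequentially \<longrightarrow> (\<forall>n. \<beta>s n > 0) \<longrightarrow>
          (\<forall>n. optimal F (J (\<beta>s n)) (minimax F (J (\<beta>s n))) (A n)) \<longrightarrow>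
          optimal F Jinf (minimax F Jinf) (seq_limsup A))"
proof -
  interpret monotone_lsc_family F J Jinf
    by unfold_locales (fact lsc mono Jinf_def c_fin cinf_fin F2')+
  show ?thesis
  proof (intro conjI allI impI)
    show "\<exists>A. optimal F (J \<beta>) (minimax F (J \<beta>)) A" if "\<beta> > 0" for \<beta>
      using that by (rule optimal_exists)
    show "((\<lambda>\<beta>. minimax F (J \<beta>)) \<longlongrightarrow> minimax F Jinf) at_top"
      by (rule minimax_tendsto)
    show "optimal F Jinf (minimax F Jinf) (seq_limsup A)"
      if "filterlim \<beta>s at_top sequentially" "\<forall>n. \<beta>s n > 0"
        and "\<forall>n. optimal F (J (\<beta>s n)) (minimax F (J (\<beta>s n))) (A n)" for \<beta>s A
      using that by (intro optimal_seq_limsup_of_optimal) auto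
  qed
qed

end
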